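(* Let $\mathscr{B}$ be a minimal balanced collection on $N$ and $S'\in\mathscr{B}$. Let $z\in\mathbb{R}^N_+$ with $z\neq\mathbf{1}^{S'}$ and $z_i>0$ if and only if $i\in S'$, and let $Z=\{\mathbf{1}^S\mid S\in\mathscr{B}\setminus\{S'\}\}\cup\{z\}$. If $Z$ is a minimal balanced set, then (a) there exists a vector $y$ in the orthogonal complement of $\mathrm{span}\{\mathbf{1}^S\mid S\in\mathscr{B}\setminus\{S'\}\}$ with $z\cdot y\neq0$, and (b) $z\in\mathrm{span}\{\mathbf{1}^S\mid S\in\mathscr{B}\}$.
   Context: $\mathbf{1}^S\in\mathbb{R}^N$ is the characteristic vector of $S\subseteq N$, $\mathbb{R}^N_+$ the nonnegative orthant. A collection $\mathscr{B}$ of nonempty subsets of $N$ is balanced if there exist positive weights $(\lambda_S)$ with $\sum_{S\in\mathscr{B}}\lambda_S\mathbf{1}^S=\mathbf{1}^N$, and minimal if no proper subcollection is balanced. A finite set $Z\subseteq\mathbb{R}^N_+\setminus\{0\}$ is a balanced set if there exist positive weights $(\delta_w)_{w\in Z}$ with $\sum_{w\in Z}\delta_w w=\mathbf{1}^N$; it is a minimal balanced set if no proper subset of $Z$ is balanced. *)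

theory Defs
  imports "HOL-Analysis.Analysis"
begin

text \<open>The player set N is the (finite) universe of the index type 'n;
  vectors in R^N are elements of real^'n.\<close>

definition charvec :: "'n::finite set \<Rightarrow> real^'n" where
  "charvec S = (\<chi> i. if i \<in> S then 1 else 0)"

definition balanced_collection :: "'n::finite set set \<Rightarrow> bool" where
  "balanced_collection B \<longleftrightarrow> (\<forall>S\<in>B. S \<noteq> {}) \<and>
     (\<exists>lam::'n set \<Rightarrow> real. (\<forall>S\<in>B. lam S > 0) \<and>
        (\<Sum>S\<in>B. lam S *\<^sub>R charvec S) = charvec (UNIV::'n set))"

definition minimal_balanced_collection :: "'n::finite set set \<Rightarrow> bool" where
  "minimal_balanced_collection B \<longleftrightarrow> balanced_collection B \<and>
     (\<forall>C. C \<subset> B \<longrightarrow> \<not> balanced_collection C)"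

definition nonneg_orthant :: "(real^'n::finite) set" where
  "nonneg_orthant = {x. \<forall>i. x $ i \<ge> 0}"

definition balanced_set :: "(real^'n::finite) set \<Rightarrow> bool" where
  "balanced_set Z \<longleftrightarrow> finite Z \<and> Z \<subseteq> nonneg_orthant - {0} \<and>
     (\<exists>\<delta>::real^'n \<Rightarrow> real. (\<forall>w\<in>Z. \<delta> w > 0) \<and>
        (\<Sum>w\<in>Z. \<delta> w *\<^sub>R w) = charvec (UNIV::'n set))"

definition minimal_balanced_set :: "(real^'n::finite) set \<Rightarrow> bool" where
  "minimal_balanced_set Z \<longleftrightarrow> balanced_set Z \<and>
     (\<forall>Y. Y \<subset> Z \<longrightarrow> \<not> balanced_set Y)"

end

theory Submission
  imports Defs
begin

text \<open>A positive representation of \<open>\<one>\<^sup>N\<close> by a linearly dependent set can be shifted along a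
  linear dependence until one weight vanishes, so a minimal balanced set is linearly
  independent. Hence \<open>z\<close> lies outside the span \<open>W\<close> of the remaining vectors \<open>\<one>\<^sup>S\<close>, and the
  component of \<open>z\<close> orthogonal to \<open>W\<close> gives (a). Solving the balancing equation for \<open>z\<close>
  expresses it through \<open>\<one>\<^sup>N\<close> and \<open>W\<close>, both inside \<open>span {\<one>\<^sup>S | S \<in> \<B>}\<close>, which gives (b).\<close>

lemma positive_combination_dependent_reduce:
  fixes Z :: "'a::real_vector set"
  assumes "finite Z" and "dependent Z"
    and pos: "\<forall>w\<in>Z. d w > 0" and sum_d: "(\<Sum>w\<in>Z. d w *\<^sub>R w) = v"
  obtains Y d' where "Y \<subset> Z" "\<forall>w\<in>Y. d' w > 0" "(\<Sum>w\<in>Y. d' w *\<^sub>R w) = v"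
proof -
  obtain u where "\<exists>x\<in>Z. u x \<noteq> 0" and sum_u: "(\<Sum>w\<in>Z. u w *\<^sub>R w) = 0"
    using assms(1,2) dependent_finite by blast
  then obtain c where c_pos: "\<exists>x\<in>Z. c x > 0" and sum_c: "(\<Sum>w\<in>Z. c w *\<^sub>R w) = 0"
  proof (cases "\<exists>x\<in>Z. u x > 0")
    case True
    then show ?thesis
      using sum_u by (rule that)
  next
    case False
    then have "\<exists>x\<in>Z. - u x > 0"
      using \<open>\<exists>x\<in>Z. u x \<noteq> 0\<close> by force
    moreover have "(\<Sum>w\<in>Z. (- u w) *\<^sub>R w) = 0"
      using sum_u by (simp add: sum_negf)
    ultimately show ?thesis
      by (rule that)
  qed
  define P where "P = {w\<in>Z. c w > 0}"
  have "finite P" "P \<noteq> {}"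
    using assms(1) c_pos by (auto simp: P_def)
  \<comment> \<open>the longest step along \<open>-c\<close> keeping all weights nonnegative; it kills the weight of \<open>w0\<close>\<close>
  define t where "t = Min ((\<lambda>w. d w / c w) ` P)"
  have "t \<in> (\<lambda>w. d w / c w) ` P"
    unfolding t_def using \<open>finite P\<close> \<open>P \<noteq> {}\<close> by (intro Min_in) auto
  then obtain w0 where w0: "w0 \<in> P" "t = d w0 / c w0"
    by blast
  have "t > 0"
    using w0 pos by (auto simp: P_def)
  define d' where "d' w = d w - t * c w" for w
  have d'_nonneg: "d' w \<ge> 0" if "w \<in> Z" for w
  proof (cases "c w > 0")
    case True
    then have "t \<le> d w / c w"
      using \<open>finite P\<close> that unfolding t_def by (intro Min_le) (auto simp: P_def)
    then show ?thesis
      using True by (simp add: d'_def pos_le_divide_eq)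
  next
    case False
    then have "t * c w \<le> 0"
      using \<open>t > 0\<close> by (simp add: mult_nonneg_nonpos)
    then show ?thesis
      using pos that by (fastforce simp: d'_def)
  qed
  define Y where "Y = {w\<in>Z. d' w > 0}"
  have d'_zero: "d' w = 0" if "w \<in> Z - Y" for w
    using that d'_nonneg[of w] by (simp add: Y_def)
  have "w0 \<in> Z - Y"
    using w0 by (auto simp: P_def Y_def d'_def)
  then have "Y \<subset> Z"
    by (auto simp: Y_def)
  moreover have "\<forall>w\<in>Y. d' w > 0"
    by (simp add: Y_def)
  moreover have "(\<Sum>w\<in>Y. d' w *\<^sub>R w) = v"
  proof -
    have "(\<Sum>w\<in>Y. d' w *\<^sub>R w) = (\<Sum>w\<in>Z. d' w *\<^sub>R w)"
      using assms(1) \<open>Y \<subset> Z\<close> d'_zero by (intro sum.mono_neutral_left) auto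
    also have "\<dots> = (\<Sum>w\<in>Z. d w *\<^sub>R w) - t *\<^sub>R (\<Sum>w\<in>Z. c w *\<^sub>R w)"
      by (simp add: d'_def scaleR_diff_left sum_subtractf scaleR_sum_right)
    finally show ?thesis
      using sum_d sum_c by simp
  qed
  ultimately show ?thesis
    by (rule that)
qed

lemma minimal_balanced_set_independent:
  assumes "minimal_balanced_set Z"
  shows "independent Z"
proof
  assume "dependent Z"
  obtain d where "finite Z" "Z \<subseteq> nonneg_orthant - {0}"
    and pos: "\<forall>w\<in>Z. d w > 0" and sum_d: "(\<Sum>w\<in>Z. d w *\<^sub>R w) = charvec UNIV"
    using assms by (auto simp: minimal_balanced_set_def balanced_set_def)
  then obtain Y d' where "Y \<subset> Z" "\<forall>w\<in>Y. d' w > 0" "(\<Sum>w\<in>Y. d' w *\<^sub>R w) = charvec UNIV"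
    using positive_combination_dependent_reduce[OF \<open>finite Z\<close> \<open>dependent Z\<close> pos sum_d] by blast
  moreover from \<open>Y \<subset> Z\<close> have "Y \<subseteq> Z"
    by blast
  ultimately have "balanced_set Y"
    using \<open>finite Z\<close> \<open>Z \<subseteq> nonneg_orthant - {0}\<close> unfolding balanced_set_def
    by (blast intro: finite_subset)
  with \<open>Y \<subset> Z\<close> assms show False
    by (auto simp: minimal_balanced_set_def)
qed

lemma balanced_set_member_in_span:
  assumes "balanced_set Z" and "w \<in> Z"
  shows "w \<in> span (insert (charvec UNIV) (Z - {w}))"
proof -
  obtain d where "finite Z" "d w > 0" and sum_d: "(\<Sum>v\<in>Z. d v *\<^sub>R v) = charvec UNIV"
    using assms by (auto simp: balanced_set_def)
  let ?V = "span (insert (charvec UNIV) (Z - {w}))"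
  have "charvec UNIV = d w *\<^sub>R w + (\<Sum>v\<in>Z - {w}. d v *\<^sub>R v)"
    using sum_d \<open>finite Z\<close> \<open>w \<in> Z\<close> by (simp add: sum.remove)
  then have "d w *\<^sub>R w = charvec UNIV - (\<Sum>v\<in>Z - {w}. d v *\<^sub>R v)"
    by (simp add: algebra_simps)
  also have "\<dots> \<in> ?V"
    by (intro span_diff span_sum span_scale span_base) auto
  finally have "(1 / d w) *\<^sub>R (d w *\<^sub>R w) \<in> ?V"
    by (rule span_scale)
  with \<open>d w > 0\<close> show ?thesis
    by simp
qed

lemma balanced_collection_charvec_UNIV_in_span:
  assumes "balanced_collection B"
  shows "charvec UNIV \<in> span (charvec ` B)"
proof -
  obtain lam where "(\<Sum>S\<in>B. lam S *\<^sub>R charvec S) = charvec UNIV"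
    using assms by (auto simp: balanced_collection_def)
  moreover have "(\<Sum>S\<in>B. lam S *\<^sub>R charvec S) \<in> span (charvec ` B)"
    by (intro span_sum span_scale span_base) auto
  ultimately show ?thesis
    by simp
qed

lemma charvec_component_pos_iff: "charvec S $ i > 0 \<longleftrightarrow> i \<in> S"
  by (simp add: charvec_def)

lemma not_in_span_imp_orthogonal_comp_witness:
  fixes x :: "'a::euclidean_space"
  assumes "x \<notin> span W"
  shows "\<exists>y \<in> orthogonal_comp (span W). x \<bullet> y \<noteq> 0"
proof -
  have "x \<notin> orthogonal_comp (orthogonal_comp (span W))"
    using assms by (simp add: orthogonal_comp_self)
  then show ?thesis
    by (auto simp: orthogonal_comp_def orthogonal_def inner_commute)
qed

theorem proposition6p2:
  fixes B :: "'n::finite set set" and S' :: "'n set" and z :: "real^'n"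
  assumes "minimal_balanced_collection B"
    and "S' \<in> B"
    and "z \<in> nonneg_orthant"
    and "z \<noteq> charvec S'"
    and "\<And>i. z $ i > 0 \<longleftrightarrow> i \<in> S'"
    and "minimal_balanced_set (charvec ` (B - {S'}) \<union> {z})"
  shows "(\<exists>y \<in> orthogonal_comp (span (charvec ` (B - {S'}))). z \<bullet> y \<noteq> 0)
         \<and> z \<in> span (charvec ` B)"
proof -
  define W where "W = charvec ` (B - {S'})"
  have "z \<notin> W"
    using assms(5) charvec_component_pos_iff by (auto simp: W_def)
  then have Z_minus_z: "(W \<union> {z}) - {z} = W"
    by auto
  have "independent (W \<union> {z})"
    using assms(6) minimal_balanced_set_independent by (simp add: W_def)
  then have "z \<notin> span W"
    using Z_minus_z by (auto simp: dependent_def)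
  then have part_a: "\<exists>y \<in> orthogonal_comp (span W). z \<bullet> y \<noteq> 0"
    by (rule not_in_span_imp_orthogonal_comp_witness)
  have "z \<in> span (insert (charvec UNIV) W)"
    using balanced_set_member_in_span[of "W \<union> {z}" z] assms(6) Z_minus_z
    by (simp add: W_def minimal_balanced_set_def)
  moreover have "insert (charvec UNIV) W \<subseteq> span (charvec ` B)"
    using assms(1) balanced_collection_charvec_UNIV_in_span
    by (auto simp: W_def minimal_balanced_collection_def intro: span_base)
  ultimately have "z \<in> span (charvec ` B)"
    using span_minimal[OF _ subspace_span] by blast
  with part_a show ?thesis
    by (simp add: W_def)
qed

end
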